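(* Let $T$ be a rank-$r$ tensor and $t$ a rank-$s$ tensor, and let $1\le i\le r$, $1\le j\le s$. If $T,t\in\mathcal{DP}$, or if $T,t\in-\mathcal{DP}$, then $(T\,{}_i\!\times_j t)\in\mathcal{DP}$. If $T\in\mathcal{DP}$ and $t\in-\mathcal{DP}$, then $(T\,{}_i\!\times_j t)\in-\mathcal{DP}$ and $(t\,{}_j\!\times_i T)\in-\mathcal{DP}$.
   Context: Lorentzian metric of signature $(+,-,\dots,-)$ with time orientation; causal: $v\ne0$, $v\cdot v\ge0$. $\mathcal{DP}$: tensors $X_{a_1\dots a_m}$ with $X_{a_1\dots a_m}u_1^{a_1}\cdots u_m^{a_m}\ge0$ for all causal future-pointing $u_k$ (rank 0: non-negative reals); $-\mathcal{DP}=\{X:-X\in\mathcal{DP}\}$. The product $(T\,{}_i\!\times_j t)_{a_1\dots a_{r+s-2}}=T_{a_1\dots a_{i-1}ba_i\dots a_{r-1}}\,t_{a_r\dots a_{r+j-2}}{}^{b}{}_{a_{r+j-1}\dots a_{r+s-2}}$ contracts the $i$-th index of $T$ with the $j$-th index of $t$. *)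

theory Defs
  imports Complex_Main
begin

text \<open>Spacetime of dimension d, in an orthonormal frame: index 0 is the time
direction, the metric is eta = diag(1,-1,...,-1).  Vectors are given by their
contravariant components (functions nat => real, only indices < d matter).
A rank-r tensor is given by its covariant components X a_1 ... a_r, encoded as a
function on index lists (only lists of length r with entries < d matter).\<close>

definition eta :: "nat \<Rightarrow> real" where
  "eta a = (if a = 0 then 1 else -1)"

definition mink :: "nat \<Rightarrow> (nat \<Rightarrow> real) \<Rightarrow> (nat \<Rightarrow> real) \<Rightarrow> real" where
  "mink d u v = (\<Sum>a<d. eta a * u a * v a)"

definition causal :: "nat \<Rightarrow> (nat \<Rightarrow> real) \<Rightarrow> bool" where
  "causal d u \<longleftrightarrow> (\<exists>a<d. u a \<noteq> 0) \<and> mink d u u \<ge> 0"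

definition future_pointing :: "(nat \<Rightarrow> real) \<Rightarrow> bool" where
  "future_pointing u \<longleftrightarrow> u 0 > 0"

definition idx_lists :: "nat \<Rightarrow> nat \<Rightarrow> nat list set" where
  "idx_lists d r = {as. length as = r \<and> set as \<subseteq> {..<d}}"

definition tensor_eval :: "nat \<Rightarrow> nat \<Rightarrow> (nat list \<Rightarrow> real) \<Rightarrow> (nat \<Rightarrow> nat \<Rightarrow> real) \<Rightarrow> real" where
  "tensor_eval d r X us = (\<Sum>as\<in>idx_lists d r. X as * (\<Prod>k<r. us k (as ! k)))"

definition DP :: "nat \<Rightarrow> nat \<Rightarrow> (nat list \<Rightarrow> real) \<Rightarrow> bool" where
  "DP d r X \<longleftrightarrow> (\<forall>us. (\<forall>k<r. causal d (us k) \<and> future_pointing (us k))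
                          \<longrightarrow> tensor_eval d r X us \<ge> 0)"

definition negDP :: "nat \<Rightarrow> nat \<Rightarrow> (nat list \<Rightarrow> real) \<Rightarrow> bool" where
  "negDP d r X \<longleftrightarrow> DP d r (\<lambda>as. - X as)"

text \<open>(T i\<times>j t)_{a_1..a_{r+s-2}} = T_{a_1..a_{i-1} b a_i..a_{r-1}} t_{a_r..a_{r+j-2}}^b_{a_{r+j-1}..a_{r+s-2}},
  where r is the rank of T; the raised index is t^b = eta^{bc} t_c.\<close>
definition contr :: "nat \<Rightarrow> nat \<Rightarrow> nat \<Rightarrow> nat \<Rightarrow> (nat list \<Rightarrow> real) \<Rightarrow> (nat list \<Rightarrow> real) \<Rightarrow> (nat list \<Rightarrow> real)" where
  "contr d r i j T t = (\<lambda>as.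
     let xs = take (r - 1) as; ys = drop (r - 1) as in
     (\<Sum>b<d. T (take (i - 1) xs @ [b] @ drop (i - 1) xs) * eta b *
              t (take (j - 1) ys @ [b] @ drop (j - 1) ys)))"

end

theory Submission
  imports Defs
begin

text \<open>Fill every slot of T except the i-th, and every slot of t except the j-th, with
future-pointing causal vectors. What remains are two covectors A and B which are
non-negative on the future cone, and the value of the contracted tensor is their
Minkowski product A 0 B 0 - A_s . B_s. Testing on e_0 gives A 0, B 0 \<ge> 0, and testing
on the future null vector (|B_s|, -B_s) gives A_s . B_s \<le> A 0 |B_s| \<le> A 0 B 0.
The cases involving -DP follow by linearity.\<close>

definition insert_at :: "nat \<Rightarrow> nat \<Rightarrow> nat list \<Rightarrow> nat list" where
  "insert_at p b xs = take p xs @ [b] @ drop p xs"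

lemma nth_insert_at_less: "k < p \<Longrightarrow> p \<le> length xs \<Longrightarrow> insert_at p b xs ! k = xs ! k"
  by (simp add: insert_at_def nth_append)

lemma nth_insert_at_same: "p \<le> length xs \<Longrightarrow> insert_at p b xs ! p = b"
  by (simp add: insert_at_def nth_append)

lemma nth_insert_at_Suc: "p \<le> k \<Longrightarrow> k < length xs \<Longrightarrow> insert_at p b xs ! Suc k = xs ! k"
  by (simp add: insert_at_def nth_append)

lemma sum_idx_lists_append:
  "(\<Sum>as\<in>idx_lists d (m + n). f as) = (\<Sum>xs\<in>idx_lists d m. \<Sum>ys\<in>idx_lists d n. f (xs @ ys))"
proof -
  let ?g = "\<lambda>(xs, ys). xs @ ys"
  have inj: "inj_on ?g (idx_lists d m \<times> idx_lists d n)"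
    by (auto simp: inj_on_def idx_lists_def)
  have "as \<in> ?g ` (idx_lists d m \<times> idx_lists d n)" if "as \<in> idx_lists d (m + n)" for as
  proof
    show "as = ?g (take m as, drop m as)" by simp
    show "(take m as, drop m as) \<in> idx_lists d m \<times> idx_lists d n"
      using that by (auto simp: idx_lists_def dest: in_set_takeD in_set_dropD)
  qed
  then have "?g ` (idx_lists d m \<times> idx_lists d n) = idx_lists d (m + n)"
    by (auto simp: idx_lists_def)
  then show ?thesis
    using sum.reindex[OF inj, of f] by (simp add: sum.cartesian_product split_def)
qed

lemma sum_idx_lists_insert_at:
  assumes "p \<le> m"
  shows "(\<Sum>as\<in>idx_lists d (Suc m). f as) = (\<Sum>xs\<in>idx_lists d m. \<Sum>b<d. f (insert_at p b xs))"
proof -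
  let ?g = "\<lambda>(xs, b). insert_at p b xs"
  have inj: "inj_on ?g (idx_lists d m \<times> {..<d})"
  proof (rule inj_onI, clarsimp)
    fix xs b xs' b'
    assume "xs \<in> idx_lists d m" "xs' \<in> idx_lists d m" "insert_at p b xs = insert_at p b' xs'"
    then have "take p xs = take p xs'" "b = b'" "drop p xs = drop p xs'"
      by (auto simp: idx_lists_def insert_at_def)
    then show "xs = xs' \<and> b = b'" by (metis append_take_drop_id)
  qed
  have "as \<in> ?g ` (idx_lists d m \<times> {..<d})" if as: "as \<in> idx_lists d (Suc m)" for as
  proof
    have len: "length as = Suc m" using as by (simp add: idx_lists_def)
    then show "as = ?g (take p as @ drop (Suc p) as, as ! p)"
      using assms by (simp add: insert_at_def) (metis Cons_nth_drop_Suc append_take_drop_id le_imp_less_Suc)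
    have "as ! p \<in> set as" using len assms by (intro nth_mem) simp
    then have "as ! p < d" using as by (auto simp: idx_lists_def)
    then show "(take p as @ drop (Suc p) as, as ! p) \<in> idx_lists d m \<times> {..<d}"
      using as assms len by (auto simp: idx_lists_def dest!: in_set_takeD in_set_dropD)
  qed
  then have "?g ` (idx_lists d m \<times> {..<d}) = idx_lists d (Suc m)"
    using assms by (auto simp: idx_lists_def insert_at_def dest!: in_set_takeD in_set_dropD)
  then show ?thesis
    using sum.reindex[OF inj, of f] by (simp add: sum.cartesian_product split_def)
qed

lemma prod_lessThan_append_nth:
  "length xs = m \<Longrightarrow>
     (\<Prod>k<m + n. g k ((xs @ ys) ! k)) = (\<Prod>k<m. g k (xs ! k)) * (\<Prod>k<n. g (m + k) (ys ! k))"
  by (induction n) (auto intro!: prod.cong simp: nth_append mult.assoc)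

lemma prod_lessThan_Suc_remove:
  "p \<le> m \<Longrightarrow> (\<Prod>k<Suc m. g k) = g p * (\<Prod>k<m. g (if k < p then k else Suc k))"
proof (induction m)
  case (Suc m)
  then show ?case
    by (cases "p \<le> m") (simp_all add: mult_ac le_Suc_eq)
qed simp

lemma sum_lessThan_time_space:
  fixes d :: nat
  assumes "1 \<le> d"
  shows "(\<Sum>a<d. f a) = f 0 + (\<Sum>a\<in>{1..<d}. f a)"
proof -
  have "{..<d} = insert 0 {1..<d}" using assms by auto
  then show ?thesis by simp
qed

definition future_nonneg :: "nat \<Rightarrow> (nat \<Rightarrow> real) \<Rightarrow> bool" where
  "future_nonneg d A \<longleftrightarrow> (\<forall>w. causal d w \<and> future_pointing w \<longrightarrow> 0 \<le> (\<Sum>b<d. A b * w b))"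

lemma future_nonneg_time_component:
  assumes "1 \<le> d" and "future_nonneg d A"
  shows "0 \<le> A 0"
proof -
  define e0 where "e0 a = (if a = 0 then 1 else 0 :: real)" for a :: nat
  have "causal d e0 \<and> future_pointing e0"
    using assms(1) by (auto simp: causal_def future_pointing_def e0_def mink_def eta_def if_distrib cong: if_cong)
  moreover have "(\<Sum>b<d. A b * e0 b) = A 0"
    using assms(1) by (simp add: e0_def if_distrib cong: if_cong)
  ultimately show ?thesis using assms(2) by (metis future_nonneg_def)
qed

lemma mink_nonneg_if_future_nonneg:
  assumes d: "1 \<le> d" and A: "future_nonneg d A" and B: "future_nonneg d B"
  shows "0 \<le> mink d A B"
proof -
  have A0: "0 \<le> A 0" and B0: "0 \<le> B 0"
    using future_nonneg_time_component[OF d] A B by auto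
  have mink: "mink d A B = A 0 * B 0 - (\<Sum>a\<in>{1..<d}. A a * B a)"
    using d by (simp add: mink_def sum_lessThan_time_space eta_def sum_negf)
  define n where "n = sqrt (\<Sum>a\<in>{1..<d}. (B a)\<^sup>2)"
  have n2: "n\<^sup>2 = (\<Sum>a\<in>{1..<d}. (B a)\<^sup>2)"
    unfolding n_def by (simp add: sum_nonneg)
  show ?thesis
  proof (cases "n = 0")
    case True
    then have "\<forall>a\<in>{1..<d}. B a = 0" using n2 by (simp add: sum_nonneg_eq_0_iff)
    then show ?thesis using mink A0 B0 by simp
  next
    case False
    then have n_pos: "0 < n" by (simp add: n_def sum_nonneg order_less_le)
    define w where "w a = (if a = 0 then n else - B a)" for a :: nat
    have "mink d w w = n\<^sup>2 - (\<Sum>a\<in>{1..<d}. (B a)\<^sup>2)"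
      using d by (simp add: mink_def sum_lessThan_time_space w_def eta_def power2_eq_square sum_negf)
    then have "causal d w \<and> future_pointing w"
      using d n_pos n2 by (auto simp: causal_def future_pointing_def w_def)
    then have Aw: "0 \<le> (\<Sum>b<d. A b * w b)" and Bw: "0 \<le> (\<Sum>b<d. B b * w b)"
      using A B by (auto simp: future_nonneg_def)
    have "(\<Sum>b<d. A b * w b) = A 0 * n - (\<Sum>a\<in>{1..<d}. A a * B a)"
      using d by (simp add: sum_lessThan_time_space w_def sum_negf)
    with Aw have space: "(\<Sum>a\<in>{1..<d}. A a * B a) \<le> A 0 * n" by simp
    have "(\<Sum>b<d. B b * w b) = B 0 * n - n\<^sup>2"
      using d n2 by (simp add: sum_lessThan_time_space w_def sum_negf power2_eq_square)
    with Bw n_pos have "n \<le> B 0" by (simp add: power2_eq_square)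
    then have "A 0 * n \<le> A 0 * B 0" using A0 by (simp add: mult_left_mono)
    then show ?thesis using mink space by simp
  qed
qed

text \<open>The remaining slot p is counted from 0, whereas contr counts from 1.\<close>

definition eval_except_slot ::
  "nat \<Rightarrow> nat \<Rightarrow> nat \<Rightarrow> (nat list \<Rightarrow> real) \<Rightarrow> (nat \<Rightarrow> nat \<Rightarrow> real) \<Rightarrow> nat \<Rightarrow> real" where
  "eval_except_slot d m p X us b = (\<Sum>xs\<in>idx_lists d m. X (insert_at p b xs) * (\<Prod>k<m. us k (xs ! k)))"

lemma tensor_eval_insert_vector:
  assumes "p \<le> m"
  shows "tensor_eval d (Suc m) X (\<lambda>k. if k < p then us k else if k = p then w else us (k - 1))
       = (\<Sum>b<d. eval_except_slot d m p X us b * w b)"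
    (is "tensor_eval d (Suc m) X ?U = _")
proof -
  have "tensor_eval d (Suc m) X ?U
      = (\<Sum>xs\<in>idx_lists d m. \<Sum>b<d. X (insert_at p b xs) * (\<Prod>k<Suc m. ?U k (insert_at p b xs ! k)))"
    unfolding tensor_eval_def by (rule sum_idx_lists_insert_at[OF assms])
  also have "\<dots> = (\<Sum>xs\<in>idx_lists d m. \<Sum>b<d. X (insert_at p b xs) * (w b * (\<Prod>k<m. us k (xs ! k))))"
  proof (intro sum.cong refl arg_cong2[where f = "(*)"])
    fix xs b assume "xs \<in> idx_lists d m"
    then have "length xs = m" by (simp add: idx_lists_def)
    then show "(\<Prod>k<Suc m. ?U k (insert_at p b xs ! k)) = w b * (\<Prod>k<m. us k (xs ! k))"
      using assms unfolding prod_lessThan_Suc_remove[OF assms]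
      by (auto simp: nth_insert_at_less nth_insert_at_same nth_insert_at_Suc intro!: prod.cong)
  qed
  also have "\<dots> = (\<Sum>b<d. eval_except_slot d m p X us b * w b)"
    unfolding eval_except_slot_def
    by (subst sum.swap) (simp add: sum_distrib_left sum_distrib_right mult_ac)
  finally show ?thesis .
qed

lemma future_nonneg_eval_except_slot:
  assumes "DP d (Suc m) X" and "p \<le> m"
    and "\<forall>k<m. causal d (us k) \<and> future_pointing (us k)"
  shows "future_nonneg d (eval_except_slot d m p X us)"
  unfolding future_nonneg_def
proof (intro allI impI)
  fix w assume w: "causal d w \<and> future_pointing w"
  define U where "U k = (if k < p then us k else if k = p then w else us (k - 1))" for k
  have "\<forall>k<Suc m. causal d (U k) \<and> future_pointing (U k)"
    using assms(2,3) w by (auto simp: U_def)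
  with assms(1) have "0 \<le> tensor_eval d (Suc m) X U"
    unfolding DP_def by blast
  then show "0 \<le> (\<Sum>b<d. eval_except_slot d m p X us b * w b)"
    unfolding U_def tensor_eval_insert_vector[OF assms(2)] .
qed

lemma tensor_eval_contr:
  assumes "p \<le> m"
  shows "tensor_eval d (m + n) (contr d (Suc m) (Suc p) (Suc q) T t) us
       = mink d (eval_except_slot d m p T us) (eval_except_slot d n q t (\<lambda>k. us (m + k)))"
proof -
  have "tensor_eval d (m + n) (contr d (Suc m) (Suc p) (Suc q) T t) us
      = (\<Sum>xs\<in>idx_lists d m. \<Sum>ys\<in>idx_lists d n. \<Sum>b<d. eta b *
           (T (insert_at p b xs) * (\<Prod>k<m. us k (xs ! k))) *
           (t (insert_at q b ys) * (\<Prod>k<n. us (m + k) (ys ! k))))"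
    unfolding tensor_eval_def sum_idx_lists_append
  proof (intro sum.cong refl)
    fix xs ys assume "xs \<in> idx_lists d m"
    then have len: "length xs = m" by (simp add: idx_lists_def)
    then have contr: "contr d (Suc m) (Suc p) (Suc q) T t (xs @ ys)
             = (\<Sum>b<d. T (insert_at p b xs) * eta b * t (insert_at q b ys))"
      using assms by (simp add: contr_def insert_at_def)
    show "contr d (Suc m) (Suc p) (Suc q) T t (xs @ ys) * (\<Prod>k<m + n. us k ((xs @ ys) ! k))
        = (\<Sum>b<d. eta b * (T (insert_at p b xs) * (\<Prod>k<m. us k (xs ! k))) *
             (t (insert_at q b ys) * (\<Prod>k<n. us (m + k) (ys ! k))))"
      unfolding contr prod_lessThan_append_nth[OF len] sum_distrib_right
      by (intro sum.cong) (simp_all add: mult_ac)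
  qed
  also have "\<dots> = mink d (eval_except_slot d m p T us) (eval_except_slot d n q t (\<lambda>k. us (m + k)))"
    unfolding mink_def eval_except_slot_def
    by (simp add: sum_distrib_left sum_distrib_right mult_ac sum.swap[of _ "{..<d}"])
  finally show ?thesis .
qed

lemma DP_contr:
  assumes "DP d r T" and "DP d s t" and "1 \<le> d"
    and "1 \<le> i" "i \<le> r" and "1 \<le> j" "j \<le> s"
  shows "DP d (r + s - 2) (contr d r i j T t)"
proof -
  obtain m p where mp: "r = Suc m" "i = Suc p" "p \<le> m"
    using assms(4,5) by (intro that[of "r - 1" "i - 1"]) auto
  obtain n q where nq: "s = Suc n" "j = Suc q" "q \<le> n"
    using assms(6,7) by (intro that[of "s - 1" "j - 1"]) auto
  have "0 \<le> tensor_eval d (m + n) (contr d (Suc m) (Suc p) (Suc q) T t) us"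
    if us: "\<forall>k<m + n. causal d (us k) \<and> future_pointing (us k)" for us
  proof -
    have "future_nonneg d (eval_except_slot d m p T us)"
      using assms(1) mp us by (intro future_nonneg_eval_except_slot) simp_all
    moreover have "future_nonneg d (eval_except_slot d n q t (\<lambda>k. us (m + k)))"
      using assms(2) nq us by (intro future_nonneg_eval_except_slot) simp_all
    ultimately show ?thesis
      unfolding tensor_eval_contr[OF mp(3)] by (rule mink_nonneg_if_future_nonneg[OF assms(3)])
  qed
  moreover have "r + s - 2 = m + n" using mp nq by simp
  ultimately show ?thesis
    unfolding DP_def mp(1,2) nq(2) by auto
qed

lemma contr_uminus_both: "contr d r i j (\<lambda>as. - T as) (\<lambda>as. - t as) = contr d r i j T t"
  by (simp add: contr_def)

lemma contr_uminus_left: "contr d r i j (\<lambda>as. - T as) t = (\<lambda>as. - contr d r i j T t as)"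
  by (simp add: contr_def Let_def sum_negf)

lemma contr_uminus_right: "contr d r i j T (\<lambda>as. - t as) = (\<lambda>as. - contr d r i j T t as)"
  by (simp add: contr_def Let_def sum_negf)

theorem mainTheorem18:
  fixes d r s i j :: nat and T t :: "nat list \<Rightarrow> real"
  assumes "2 \<le> d" and "1 \<le> i" and "i \<le> r" and "1 \<le> j" and "j \<le> s"
  shows "((DP d r T \<and> DP d s t) \<or> (negDP d r T \<and> negDP d s t)
            \<longrightarrow> DP d (r + s - 2) (contr d r i j T t))
       \<and> (DP d r T \<and> negDP d s t
            \<longrightarrow> negDP d (r + s - 2) (contr d r i j T t)
              \<and> negDP d (s + r - 2) (contr d s j i t T))"
proof -
  have d: "1 \<le> d" using assms(1) by simp
  note DP_ij = DP_contr[OF _ _ d assms(2-5)] and DP_ji = DP_contr[OF _ _ d assms(4,5,2,3)]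
  have "DP d (r + s - 2) (contr d r i j T t)" if "negDP d r T \<and> negDP d s t"
    using DP_ij[of "\<lambda>as. - T as" "\<lambda>as. - t as"] that by (simp add: negDP_def contr_uminus_both)
  moreover have "negDP d (r + s - 2) (contr d r i j T t)" if "DP d r T \<and> negDP d s t"
    using DP_ij[of T "\<lambda>as. - t as"] that by (simp add: negDP_def contr_uminus_right)
  moreover have "negDP d (s + r - 2) (contr d s j i t T)" if "DP d r T \<and> negDP d s t"
    using DP_ji[of "\<lambda>as. - t as" T] that by (simp add: negDP_def contr_uminus_left)
  ultimately show ?thesis using DP_ij by blast
qed

end
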